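(* Let $p$ be a prime, $e\ge 1$, and $G$ a finite abelian group of order $p^e$. For a representation $\rho$ of level $k$, let $j_\rho\colon\mathbf{Z}[G]\to\mathbf{Z}[\omega_k]$ be the ring homomorphism induced by $g\mapsto\rho(g)$, where $\omega_k=\exp(2\pi i/p^k)$. If $\rho$ and $\tau$ are not equivalent, then $j_\rho(b_\tau)=0$. Furthermore $j_1(b_1)=p^e$, and $j_\rho(b_\rho)=p^{e-k}(1-\omega)$ if $\rho$ has level $k>0$.
   Context: A representation is a group homomorphism $\rho\colon G\to\mathbf{C}^*$; it has level $k$ if $\rho(G)$ has $p^k$ elements (so $\rho(G)\subset\mathbf{Z}[\omega_k]$). Two representations are equivalent if they have the same kernel. Write $\omega=\exp(2\pi i/p)$. For $\rho$ of level $k>0$ set $b_\rho=\sum_{x\in G,\ \rho(x)=1}x-\sum_{\xi\in G,\ \rho(\xi)=\omega}\xi\in\mathbf{Z}[G]$. For the trivial representation $1$ set $b_1=\sum_{x\in G}x$. *)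

theory Defs
  imports Complex_Main "HOL-Algebra.Group" "HOL-Computational_Algebra.Primes"
begin

definition is_rep :: "('a, 'b) monoid_scheme \<Rightarrow> ('a \<Rightarrow> complex) \<Rightarrow> bool" where
  "is_rep G \<rho> \<longleftrightarrow> (\<forall>x\<in>carrier G. \<rho> x \<noteq> 0) \<and>
     (\<forall>x\<in>carrier G. \<forall>y\<in>carrier G. \<rho> (x \<otimes>\<^bsub>G\<^esub> y) = \<rho> x * \<rho> y)"

definition has_level :: "('a, 'b) monoid_scheme \<Rightarrow> nat \<Rightarrow> ('a \<Rightarrow> complex) \<Rightarrow> nat \<Rightarrow> bool" where
  "has_level G p \<rho> k \<longleftrightarrow> card (\<rho> ` carrier G) = p ^ k"

definition rep_kernel :: "('a, 'b) monoid_scheme \<Rightarrow> ('a \<Rightarrow> complex) \<Rightarrow> 'a set" where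
  "rep_kernel G \<rho> = {x \<in> carrier G. \<rho> x = 1}"

definition rep_equiv :: "('a, 'b) monoid_scheme \<Rightarrow> ('a \<Rightarrow> complex) \<Rightarrow> ('a \<Rightarrow> complex) \<Rightarrow> bool" where
  "rep_equiv G \<rho> \<tau> \<longleftrightarrow> rep_kernel G \<rho> = rep_kernel G \<tau>"

definition omega :: "nat \<Rightarrow> complex" where
  "omega n = exp (2 * pi * \<i> / of_nat n)"

definition triv_rep :: "'a \<Rightarrow> complex" where
  "triv_rep = (\<lambda>_. 1)"

text \<open>Elements of Z[G] for finite G are represented by their coefficient functions
  (zero outside the carrier).\<close>
definition b_elem :: "('a, 'b) monoid_scheme \<Rightarrow> nat \<Rightarrow> ('a \<Rightarrow> complex) \<Rightarrow> 'a \<Rightarrow> int" where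
  "b_elem G p \<tau> x =
     (if x \<notin> carrier G then 0
      else if (\<forall>y\<in>carrier G. \<tau> y = 1) then 1
      else (if \<tau> x = 1 then 1 else 0) - (if \<tau> x = omega p then 1 else 0))"

definition j_map :: "('a, 'b) monoid_scheme \<Rightarrow> ('a \<Rightarrow> complex) \<Rightarrow> ('a \<Rightarrow> int) \<Rightarrow> complex" where
  "j_map G \<rho> f = (\<Sum>x\<in>carrier G. of_int (f x) * \<rho> x)"

end

theory Submission
  imports Defs "HOL-Algebra.Multiplicative_Group"
begin

text \<open>Let \<open>K\<close> be the kernel of \<open>\<tau>\<close>. The values of \<open>\<tau>\<close> are \<open>p\<close>-power roots of unity, so if
  \<open>\<tau>\<close> is nontrivial some power \<open>\<xi>\<close> of an element outside \<open>K\<close> satisfies \<open>\<tau> \<xi> = \<omega>\<close>; the fibre of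
  \<open>\<omega>\<close> is the coset \<open>\<xi>K\<close>, whence \<open>j\<^sub>\<rho>(b\<^sub>\<tau>) = (1 - \<rho> \<xi>) \<cdot> (\<Sum>k\<in>K. \<rho> k)\<close>. The sum over \<open>K\<close> is \<open>|K|\<close> if \<open>\<rho>\<close>
  is trivial on \<open>K\<close> and \<open>0\<close> otherwise. For inequivalent \<open>\<rho>\<close> and \<open>\<tau>\<close>, either \<open>\<rho>\<close> is nontrivial
  on \<open>K\<close>, or \<open>K\<close> is strictly contained in the kernel of \<open>\<rho>\<close> and \<open>\<xi>\<close> can be chosen there.
  If \<open>\<rho> = \<tau>\<close> has level \<open>k\<close>, all \<open>p^k\<close> fibres of \<open>\<rho>\<close> are cosets of \<open>K\<close>, so \<open>|K| = p^(e - k)\<close>.\<close>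

lemma power_gcd_eq_1:
  fixes w :: "'a::monoid_mult"
  shows "w ^ a = 1 \<Longrightarrow> w ^ b = 1 \<Longrightarrow> w ^ gcd a b = 1"
proof (induction a b rule: gcd_nat_induct)
  case (step m n)
  have "w ^ m = w ^ (n * (m div n) + m mod n)"
    by simp
  also have "\<dots> = (w ^ n) ^ (m div n) * w ^ (m mod n)"
    by (simp only: power_add power_mult)
  finally have "w ^ (m mod n) = 1"
    using step.prems by simp
  then show ?case
    using step by (metis gcd_red_nat)
qed simp

lemma omega_power_eq_1: "p > 0 \<Longrightarrow> omega p ^ p = 1"
  by (simp add: omega_def flip: exp_of_nat_mult)

text \<open>The powers \<open>w^0, \<dots>, w^(p - 1)\<close> are distinct, hence exhaust the \<open>p\<close>-th roots of unity.\<close>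
lemma prime_root_unity_power_eq_omega:
  fixes w :: complex
  assumes p: "prime p" and w: "w ^ p = 1" "w \<noteq> 1"
  shows "\<exists>n. w ^ n = omega p"
proof -
  have p0: "p > 0"
    using p prime_gt_0_nat by blast
  have "w \<noteq> 0"
    using w p0 by (auto simp: power_0_left)
  have inj: "inj_on (\<lambda>i. w ^ i) {..<p}"
  proof (rule linorder_inj_onI')
    fix i j
    assume ij: "i \<in> {..<p}" "j \<in> {..<p}" "i < j"
    have "\<not> p dvd (j - i)"
      using ij by (auto dest: dvd_imp_le)
    then have coprime: "gcd (j - i) p = 1"
      using p by (simp add: prime_imp_coprime coprime_commute flip: coprime_iff_gcd_eq_1)
    show "w ^ i \<noteq> w ^ j"
    proof
      assume "w ^ i = w ^ j"
      moreover have "w ^ j = w ^ i * w ^ (j - i)"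
        using ij by (simp flip: power_add)
      ultimately have "w ^ (j - i) = 1"
        using \<open>w \<noteq> 0\<close> by simp
      then have "w ^ gcd (j - i) p = 1"
        using power_gcd_eq_1 w(1) by blast
      then have "w ^ 1 = 1"
        using coprime by simp
      then show False
        using w(2) by simp
    qed
  qed
  have sub: "(\<lambda>i. w ^ i) ` {..<p} \<subseteq> {z. z ^ p = 1}"
  proof safe
    fix i :: nat
    have "(w ^ i) ^ p = (w ^ p) ^ i"
      by (simp add: mult.commute flip: power_mult)
    then show "(w ^ i) ^ p = 1"
      using w(1) by simp
  qed
  have "(\<lambda>i. w ^ i) ` {..<p} = {z. z ^ p = 1}"
    using card_image[OF inj] card_roots_unity_eq[OF p0]
    by (intro card_subset_eq[OF finite_nth_roots[OF p0] sub]) simp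
  moreover have "omega p \<in> {z. z ^ p = 1}"
    using omega_power_eq_1[OF p0] by simp
  ultimately show ?thesis
    by (metis imageE)
qed

lemma prime_power_root_unity_power_eq_omega:
  fixes z :: complex
  assumes p: "prime p" and z: "z ^ (p ^ e) = 1" "z \<noteq> 1"
  shows "\<exists>n. z ^ n = omega p"
proof -
  have "\<exists>m. z ^ (p ^ m) \<noteq> 1 \<and> z ^ (p ^ Suc m) = 1"
    using z by (induction e) auto
  then obtain m where m: "z ^ (p ^ m) \<noteq> 1" "(z ^ (p ^ m)) ^ p = 1"
    by (auto simp: power_mult[symmetric] mult.commute)
  then obtain n where "(z ^ (p ^ m)) ^ n = omega p"
    using prime_root_unity_power_eq_omega[OF p] by blast
  then show ?thesis
    by (metis power_mult)
qed

lemma is_rep_mult: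
  "is_rep G \<rho> \<Longrightarrow> x \<in> carrier G \<Longrightarrow> y \<in> carrier G \<Longrightarrow> \<rho> (x \<otimes>\<^bsub>G\<^esub> y) = \<rho> x * \<rho> y"
  by (simp add: is_rep_def)

lemma is_rep_one: "group G \<Longrightarrow> is_rep G \<rho> \<Longrightarrow> \<rho> \<one>\<^bsub>G\<^esub> = 1"
  unfolding is_rep_def
  by (metis group.is_monoid monoid.one_closed monoid.l_one mult_cancel_right1)

lemma is_rep_pow:
  assumes "group G" "is_rep G \<rho>" "x \<in> carrier G"
  shows "\<rho> (x [^]\<^bsub>G\<^esub> (n::nat)) = \<rho> x ^ n"
proof (induction n)
  case 0
  then show ?case
    using is_rep_one[OF assms(1,2)] by simp
next
  case (Suc n)
  interpret group G by fact
  show ?case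
    using Suc assms(3) is_rep_mult[OF assms(2)] by simp
qed

lemma is_rep_power_eq_omega:
  assumes "prime p" "group G" "card (carrier G) = p ^ e"
    and "is_rep G \<tau>" "x \<in> carrier G" "\<tau> x \<noteq> 1"
  shows "\<exists>n::nat. \<tau> (x [^]\<^bsub>G\<^esub> n) = omega p"
proof -
  interpret group G by fact
  have "\<tau> x ^ (p ^ e) = \<tau> (x [^]\<^bsub>G\<^esub> order G)"
    using is_rep_pow[OF assms(2,4,5)] assms(3) by (simp add: order_def)
  also have "\<dots> = 1"
    using pow_order_eq_1[OF assms(5)] is_rep_one[OF assms(2,4)] by simp
  finally obtain n where "\<tau> x ^ n = omega p"
    using prime_power_root_unity_power_eq_omega assms(1,6) by blast
  then show ?thesis
    using is_rep_pow[OF assms(2,4,5)] by auto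
qed

lemma sum_rep_fibre:
  assumes "group G" "is_rep G \<tau>" "\<xi> \<in> carrier G"
  shows "(\<Sum>x\<in>{x\<in>carrier G. \<tau> x = \<tau> \<xi>}. f x) = (\<Sum>k\<in>rep_kernel G \<tau>. f (\<xi> \<otimes>\<^bsub>G\<^esub> k))"
proof -
  interpret group G by fact
  have inv: "\<tau> (inv\<^bsub>G\<^esub> \<xi>) * \<tau> \<xi> = 1"
    using is_rep_mult[OF assms(2), of "inv\<^bsub>G\<^esub> \<xi>" \<xi>] is_rep_one[OF assms(1,2)] assms(3) by simp
  show ?thesis
    unfolding rep_kernel_def
    by (rule sum.reindex_bij_witness[where i = "\<lambda>k. \<xi> \<otimes>\<^bsub>G\<^esub> k"
          and j = "\<lambda>x. inv\<^bsub>G\<^esub> \<xi> \<otimes>\<^bsub>G\<^esub> x"])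
      (use assms(3) inv is_rep_mult[OF assms(2)] in \<open>auto simp: m_assoc[symmetric]\<close>)
qed

lemma sum_rep_kernel_eq_0:
  assumes "group G" "is_rep G \<tau>" "is_rep G \<rho>"
    and "k\<^sub>0 \<in> rep_kernel G \<tau>" "\<rho> k\<^sub>0 \<noteq> 1"
  shows "(\<Sum>k\<in>rep_kernel G \<tau>. \<rho> k) = 0"
proof -
  have k\<^sub>0: "k\<^sub>0 \<in> carrier G" "\<tau> k\<^sub>0 = 1"
    using assms(4) by (auto simp: rep_kernel_def)
  let ?S = "\<Sum>k\<in>rep_kernel G \<tau>. \<rho> k"
  have "?S = (\<Sum>k\<in>rep_kernel G \<tau>. \<rho> (k\<^sub>0 \<otimes>\<^bsub>G\<^esub> k))"
    using sum_rep_fibre[OF assms(1,2) k\<^sub>0(1), of \<rho>] k\<^sub>0(2) by (simp add: rep_kernel_def)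
  also have "\<dots> = \<rho> k\<^sub>0 * ?S"
    unfolding sum_distrib_left using k\<^sub>0(1) is_rep_mult[OF assms(3)]
    by (intro sum.cong) (auto simp: rep_kernel_def)
  finally have "(1 - \<rho> k\<^sub>0) * ?S = 0"
    by (simp add: algebra_simps)
  then show ?thesis
    using assms(5) by simp
qed

lemma card_carrier_eq_card_image_mult_card_kernel:
  assumes "group G" "finite (carrier G)" "is_rep G \<rho>"
  shows "card (carrier G) = card (\<rho> ` carrier G) * card (rep_kernel G \<rho>)"
proof -
  have fibre: "card {x\<in>carrier G. \<rho> x = c} = card (rep_kernel G \<rho>)" if c: "c \<in> \<rho> ` carrier G" for c
  proof -
    obtain z where z: "z \<in> carrier G" "c = \<rho> z"
      using c by blast
    show ?thesis
      using sum_rep_fibre[OF assms(1,3) z(1), of "\<lambda>_. 1::nat"] z(2) by simp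
  qed
  have "card (carrier G) = (\<Sum>c\<in>\<rho> ` carrier G. card {x\<in>carrier G. \<rho> x = c})"
    using sum.image_gen[OF assms(2), of "\<lambda>_. 1::nat" \<rho>] by simp
  also have "\<dots> = card (\<rho> ` carrier G) * card (rep_kernel G \<rho>)"
    using fibre by simp
  finally show ?thesis .
qed

lemma j_map_b_elem_trivial:
  "\<forall>y\<in>carrier G. \<tau> y = 1 \<Longrightarrow> j_map G \<rho> (b_elem G p \<tau>) = (\<Sum>x\<in>carrier G. \<rho> x)"
  by (simp add: j_map_def b_elem_def)

lemma j_map_b_elem_nontrivial:
  assumes "group G" "finite (carrier G)" "is_rep G \<tau>" "is_rep G \<rho>"
    and "\<not> (\<forall>y\<in>carrier G. \<tau> y = 1)" "\<xi> \<in> carrier G" "\<tau> \<xi> = omega p"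
  shows "j_map G \<rho> (b_elem G p \<tau>) = (1 - \<rho> \<xi>) * (\<Sum>k\<in>rep_kernel G \<tau>. \<rho> k)"
proof -
  have "j_map G \<rho> (b_elem G p \<tau>) =
      (\<Sum>x\<in>carrier G. (if \<tau> x = 1 then \<rho> x else 0) - (if \<tau> x = omega p then \<rho> x else 0))"
    unfolding j_map_def b_elem_def using assms(5) by (intro sum.cong) auto
  also have "\<dots> = (\<Sum>k\<in>rep_kernel G \<tau>. \<rho> k) - (\<Sum>x\<in>{x\<in>carrier G. \<tau> x = \<tau> \<xi>}. \<rho> x)"
    by (simp add: sum_subtractf sum.inter_filter[OF assms(2)] rep_kernel_def assms(7))
  also have "(\<Sum>x\<in>{x\<in>carrier G. \<tau> x = \<tau> \<xi>}. \<rho> x) = \<rho> \<xi> * (\<Sum>k\<in>rep_kernel G \<tau>. \<rho> k)"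
    unfolding sum_rep_fibre[OF assms(1,3,6)] sum_distrib_left using assms(6) is_rep_mult[OF assms(4)]
    by (intro sum.cong) (auto simp: rep_kernel_def)
  finally show ?thesis
    by (simp add: algebra_simps)
qed

lemma j_map_b_elem_kernel_not_subset:
  assumes "prime p" "group G" "finite (carrier G)" "card (carrier G) = p ^ e"
    and "is_rep G \<tau>" "is_rep G \<rho>" "\<not> rep_kernel G \<tau> \<subseteq> rep_kernel G \<rho>"
  shows "j_map G \<rho> (b_elem G p \<tau>) = 0"
proof -
  obtain k\<^sub>0 where k\<^sub>0: "k\<^sub>0 \<in> rep_kernel G \<tau>" "\<rho> k\<^sub>0 \<noteq> 1"
    using assms(7) by (auto simp: rep_kernel_def)
  have sum0: "(\<Sum>k\<in>rep_kernel G \<tau>. \<rho> k) = 0"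
    by (rule sum_rep_kernel_eq_0[OF assms(2,5,6) k\<^sub>0])
  show ?thesis
  proof (cases "\<forall>y\<in>carrier G. \<tau> y = 1")
    case True
    then have "rep_kernel G \<tau> = carrier G"
      by (auto simp: rep_kernel_def)
    then show ?thesis
      using j_map_b_elem_trivial[OF True] sum0 by simp
  next
    case False
    then obtain x and n :: nat where x: "x \<in> carrier G" "\<tau> (x [^]\<^bsub>G\<^esub> n) = omega p"
      using is_rep_power_eq_omega[OF assms(1,2,4,5)] by blast
    have "x [^]\<^bsub>G\<^esub> n \<in> carrier G"
      using x(1) assms(2) by (simp add: group.is_monoid monoid.nat_pow_closed)
    then show ?thesis
      using j_map_b_elem_nontrivial[OF assms(2,3,5,6) False _ x(2)] sum0 by simp
  qed
qed

lemma j_map_b_elem_kernel_psubset: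
  assumes "prime p" "group G" "finite (carrier G)" "card (carrier G) = p ^ e"
    and "is_rep G \<tau>" "is_rep G \<rho>" "rep_kernel G \<tau> \<subset> rep_kernel G \<rho>"
  shows "j_map G \<rho> (b_elem G p \<tau>) = 0"
proof -
  obtain y where y: "y \<in> carrier G" "\<rho> y = 1" "\<tau> y \<noteq> 1"
    using assms(7) by (auto simp: rep_kernel_def)
  then obtain n :: nat where n: "\<tau> (y [^]\<^bsub>G\<^esub> n) = omega p"
    using is_rep_power_eq_omega[OF assms(1,2,4,5)] by blast
  have "y [^]\<^bsub>G\<^esub> n \<in> carrier G"
    using y(1) assms(2) by (simp add: group.is_monoid monoid.nat_pow_closed)
  moreover have "\<rho> (y [^]\<^bsub>G\<^esub> n) = 1"
    using is_rep_pow[OF assms(2,6) y(1)] y(2) by simp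
  moreover have "\<not> (\<forall>y\<in>carrier G. \<tau> y = 1)"
    using y by blast
  ultimately show ?thesis
    using j_map_b_elem_nontrivial[OF assms(2,3,5,6) _ _ n] by simp
qed

lemma j_map_b_elem_inequivalent:
  assumes "prime p" "group G" "finite (carrier G)" "card (carrier G) = p ^ e"
    and "is_rep G \<tau>" "is_rep G \<rho>" "\<not> rep_equiv G \<rho> \<tau>"
  shows "j_map G \<rho> (b_elem G p \<tau>) = 0"
proof (cases "rep_kernel G \<tau> \<subseteq> rep_kernel G \<rho>")
  case True
  then have "rep_kernel G \<tau> \<subset> rep_kernel G \<rho>"
    using assms(7) by (auto simp: rep_equiv_def)
  then show ?thesis
    by (rule j_map_b_elem_kernel_psubset[OF assms(1-6)])
next
  case False
  then show ?thesis
    by (rule j_map_b_elem_kernel_not_subset[OF assms(1-6)])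
qed

lemma card_rep_kernel_level:
  assumes "prime p" "group G" "finite (carrier G)" "card (carrier G) = p ^ e"
    and "is_rep G \<rho>" "has_level G p \<rho> k"
  shows "card (rep_kernel G \<rho>) = p ^ (e - k)"
proof -
  have p1: "p > 1"
    using assms(1) prime_gt_1_nat by blast
  have eq: "p ^ e = p ^ k * card (rep_kernel G \<rho>)"
    using card_carrier_eq_card_image_mult_card_kernel[OF assms(2,3,5)] assms(4,6)
    by (simp add: has_level_def)
  have "\<one>\<^bsub>G\<^esub> \<in> rep_kernel G \<rho>"
    using is_rep_one[OF assms(2,5)] assms(2) by (simp add: rep_kernel_def group.is_monoid)
  then have "card (rep_kernel G \<rho>) > 0"
    using assms(3) by (auto simp: card_gt_0_iff rep_kernel_def)
  then have "p ^ k \<le> p ^ e"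
    using eq by (metis Suc_leI mult_le_mono2 nat_mult_1_right One_nat_def)
  then have "p ^ e = p ^ k * p ^ (e - k)"
    using power_le_imp_le_exp[OF p1] by (simp flip: power_add)
  with eq show ?thesis
    using p1 by simp
qed

lemma j_map_b_elem_level:
  assumes "prime p" "group G" "finite (carrier G)" "card (carrier G) = p ^ e"
    and "is_rep G \<rho>" "has_level G p \<rho> k" "k > 0"
  shows "j_map G \<rho> (b_elem G p \<rho>) = of_nat p ^ (e - k) * (1 - omega p)"
proof -
  have p1: "p > 1"
    using assms(1) prime_gt_1_nat by blast
  have one: "\<one>\<^bsub>G\<^esub> \<in> rep_kernel G \<rho>"
    using is_rep_one[OF assms(2,5)] assms(2) by (simp add: rep_kernel_def group.is_monoid)
  have card_image: "card (\<rho> ` carrier G) = p ^ k"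
    using assms(6) by (simp add: has_level_def)
  have nontrivial: "\<not> (\<forall>y\<in>carrier G. \<rho> y = 1)"
  proof
    assume "\<forall>y\<in>carrier G. \<rho> y = 1"
    then have "\<rho> ` carrier G = {1}"
      using one by (auto simp: rep_kernel_def)
    then show False
      using card_image one_less_power[OF p1 assms(7)] by simp
  qed
  then obtain x and n :: nat where x: "x \<in> carrier G" "\<rho> (x [^]\<^bsub>G\<^esub> n) = omega p"
    using is_rep_power_eq_omega[OF assms(1,2,4,5)] by blast
  have "x [^]\<^bsub>G\<^esub> n \<in> carrier G"
    using x(1) assms(2) by (simp add: group.is_monoid monoid.nat_pow_closed)
  moreover have "(\<Sum>k\<in>rep_kernel G \<rho>. \<rho> k) = (\<Sum>k\<in>rep_kernel G \<rho>. 1)"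
    by (rule sum.cong) (auto simp: rep_kernel_def)
  ultimately have "j_map G \<rho> (b_elem G p \<rho>) = (1 - omega p) * of_nat (card (rep_kernel G \<rho>))"
    using j_map_b_elem_nontrivial[OF assms(2,3,5,5) nontrivial _ x(2)] x(2) by simp
  then show ?thesis
    using card_rep_kernel_level[OF assms(1-6)] by simp
qed

theorem mainTheorem2:
  fixes G :: "('a, 'b) monoid_scheme" and p e :: nat
  assumes "prime p" and "e \<ge> 1"
    and "comm_group G" and "finite (carrier G)" and "card (carrier G) = p ^ e"
  shows "(\<forall>\<rho> \<tau>. is_rep G \<rho> \<and> is_rep G \<tau> \<and> \<not> rep_equiv G \<rho> \<tau> \<longrightarrow>
            j_map G \<rho> (b_elem G p \<tau>) = 0)
       \<and> j_map G triv_rep (b_elem G p triv_rep) = of_nat p ^ e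
       \<and> (\<forall>\<rho> k. is_rep G \<rho> \<and> has_level G p \<rho> k \<and> k > 0 \<longrightarrow>
            j_map G \<rho> (b_elem G p \<rho>) = of_nat p ^ (e - k) * (1 - omega p))"
proof -
  have G: "group G"
    using assms(3) by (simp add: comm_group_def)
  have "j_map G triv_rep (b_elem G p triv_rep) = of_nat p ^ e"
    using assms(5) by (simp add: j_map_b_elem_trivial triv_rep_def)
  then show ?thesis
    using j_map_b_elem_inequivalent[OF assms(1) G assms(4,5)]
      j_map_b_elem_level[OF assms(1) G assms(4,5)] by blast
qed

end
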